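(* Let $(G,\mathcal{T},(A^\circ,B^\circ),k)$ be a Terminal Separation instance, let $\mathcal{T}'$ be the set of terminal pairs disjoint from $A^\circ\cup B^\circ$, and let $\{s,t\}\in\mathcal{T}'$. Let $\mathcal{F}$ be the family of all maximal terminal separations of minimum cost among terminal separations extending $(A^\circ\cup\{s\},B^\circ\cup\{t\})$, and suppose that no separation in $\mathcal{F}$ contains in the union of its two sides any terminal pair of $\mathcal{T}'$ other than $\{s,t\}$. Then there exists a unique maximal terminal separation $(A_s^{\max},B_t^{\min})$ such that $A_s^{\max}\supseteq A_s$ and $B_t^{\min}\subseteq B_t$ for every $(A_s,B_t)\in\mathcal{F}$. Moreover, if $A$ is a set with $A^\circ\cup\{s\}\subseteq A$, $A\cap B^\circ=\emptyset$, $A\cap\bigcup\mathcal{T}'\subseteq\{s\}$ and $A\setminus A_s^{\max}\ne\emptyset$, then $d(A)>d(A_s^{\max})$.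
   Context: Graphs may have multiple edges but no loops; $d(X)$ is the number of edges with exactly one endpoint in $X$. For a family $\mathcal{T}$ of pairwise disjoint vertex pairs (terminals are their vertices), a terminal separation is a pair $(A,B)$ of disjoint vertex sets such that each pair in $\mathcal{T}$ either has one vertex in $A$ and one in $B$ or is disjoint from $A\cup B$; $(A',B')$ extends $(A,B)$ if $A\subseteq A'$, $B\subseteq B'$; cost $c(A,B)=(d(A)+d(B))/2$; a terminal separation is maximal if every other terminal separation extending it has strictly larger cost. A Terminal Separation instance $(G,\mathcal{T},(A^\circ,B^\circ),k)$ has every terminal of degree at most one and $(A^\circ,B^\circ)$ a terminal separation. $\bigcup\mathcal{T}'$ denotes the set of all terminals of pairs in $\mathcal{T}'$. *)

theory Defs
  imports Complex_Main "HOL-Library.Multiset"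
begin

text \<open>A multigraph without loops: finite vertex set V and a multiset E of edges,
  each edge being a 2-element subset of V (multiple edges = multiplicity in E).\<close>
definition graph :: "'a set \<Rightarrow> 'a set multiset \<Rightarrow> bool" where
  "graph V E \<longleftrightarrow> finite V \<and> (\<forall>e \<in># E. e \<subseteq> V \<and> card e = 2)"

definition dcut :: "'a set multiset \<Rightarrow> 'a set \<Rightarrow> nat" where
  "dcut E X = size (filter_mset (\<lambda>e. card (e \<inter> X) = 1) E)"

definition degree :: "'a set multiset \<Rightarrow> 'a \<Rightarrow> nat" where
  "degree E v = size (filter_mset (\<lambda>e. v \<in> e) E)"

definition terminal_family :: "'a set \<Rightarrow> 'a set set \<Rightarrow> bool" where
  "terminal_family V T \<longleftrightarrow>
     (\<forall>p \<in> T. p \<subseteq> V \<and> card p = 2) \<and> (\<forall>p \<in> T. \<forall>q \<in> T. p \<noteq> q \<longrightarrow> p \<inter> q = {})"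

definition terminal_sep :: "'a set \<Rightarrow> 'a set set \<Rightarrow> 'a set \<Rightarrow> 'a set \<Rightarrow> bool" where
  "terminal_sep V T A B \<longleftrightarrow> A \<subseteq> V \<and> B \<subseteq> V \<and> A \<inter> B = {} \<and>
     (\<forall>p \<in> T. (card (p \<inter> A) = 1 \<and> card (p \<inter> B) = 1) \<or> p \<inter> (A \<union> B) = {})"

definition cost :: "'a set multiset \<Rightarrow> 'a set \<Rightarrow> 'a set \<Rightarrow> real" where
  "cost E A B = (real (dcut E A) + real (dcut E B)) / 2"

definition maximal_sep :: "'a set \<Rightarrow> 'a set set \<Rightarrow> 'a set multiset \<Rightarrow> 'a set \<Rightarrow> 'a set \<Rightarrow> bool" where
  "maximal_sep V T E A B \<longleftrightarrow> terminal_sep V T A B \<and>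
     (\<forall>A' B'. terminal_sep V T A' B' \<and> A \<subseteq> A' \<and> B \<subseteq> B' \<and> (A', B') \<noteq> (A, B)
        \<longrightarrow> cost E A' B' > cost E A B)"

text \<open>Terminal Separation instance (the budget k plays no role in the statement).\<close>
definition TS_instance :: "'a set \<Rightarrow> 'a set multiset \<Rightarrow> 'a set set \<Rightarrow> 'a set \<Rightarrow> 'a set \<Rightarrow> nat \<Rightarrow> bool" where
  "TS_instance V E T A0 B0 k \<longleftrightarrow> graph V E \<and> terminal_family V T \<and>
     (\<forall>v \<in> \<Union>T. degree E v \<le> 1) \<and> terminal_sep V T A0 B0"

definition min_max_seps :: "'a set \<Rightarrow> 'a set set \<Rightarrow> 'a set multiset \<Rightarrow> 'a set \<Rightarrow> 'a set \<Rightarrow> ('a set \<times> 'a set) set" where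
  "min_max_seps V T E A B = {(A', B'). maximal_sep V T E A' B' \<and> A \<subseteq> A' \<and> B \<subseteq> B' \<and>
     (\<forall>A'' B''. terminal_sep V T A'' B'' \<and> A \<subseteq> A'' \<and> B \<subseteq> B'' \<longrightarrow> cost E A' B' \<le> cost E A'' B'')}"

end

theory Submission
  imports Defs "HOL-Library.Product_Order"
begin

text \<open>The cut function d is submodular and posimodular, hence the cost of separations does not
  increase under uncrossing (X, Y), (U, I) \<mapsto> (X \<union> U, Y \<inter> I), (X \<inter> U, Y \<union> I).
  By the hypothesis on \<F>, every minimum-cost extension of (A\<degree> \<union> {s}, B\<degree> \<union> {t}) avoids the
  vertices of all other free terminal pairs; for separations avoiding them the terminal condition
  holds automatically, so the minimum-cost extensions are closed under uncrossing. Therefore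
  (Amax, Bmin), the union of the left sides and the intersection of the right sides of the
  members of \<F>, is again of minimum cost, and uncrossing it with the members of \<F> shows that
  it lies in \<F>. For the inequality, (A, Bmin - A) is strictly more expensive than the optimum
  (else A would lie in a member of \<F>), while (A - Bmin, Bmin) is not cheaper; posimodularity
  of d turns these two comparisons into d(A) > d(Amax).\<close>

lemma size_filter_mset_add_le:
  assumes "\<And>e. e \<in># M \<Longrightarrow> of_bool (R e) + of_bool (S e) \<le> of_bool (P e) + (of_bool (Q e) :: nat)"
  shows "size (filter_mset R M) + size (filter_mset S M) \<le> size (filter_mset P M) + size (filter_mset Q M)"
  using assms by (induction M) fastforce+

lemma card_Int_doubleton_eq_1:
  assumes "a \<noteq> b"
  shows "card ({a, b} \<inter> Z) = 1 \<longleftrightarrow> (a \<in> Z) \<noteq> (b \<in> Z)"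
  using assms by (cases "a \<in> Z"; cases "b \<in> Z") (auto simp: Int_insert_left)

lemma dcut_add_le_if_edgewise:
  assumes "\<forall>e \<in># E. card e = 2"
    and "\<And>a b. of_bool ((a \<in> X') \<noteq> (b \<in> X')) + of_bool ((a \<in> Y') \<noteq> (b \<in> Y'))
      \<le> of_bool ((a \<in> X) \<noteq> (b \<in> X)) + (of_bool ((a \<in> Y) \<noteq> (b \<in> Y)) :: nat)"
  shows "dcut E X' + dcut E Y' \<le> dcut E X + dcut E Y"
  unfolding dcut_def
proof (rule size_filter_mset_add_le)
  fix e assume "e \<in># E"
  then obtain a b where e: "e = {a, b}" and ab: "a \<noteq> b"
    using assms(1) by (meson card_2_iff)
  show "of_bool (card (e \<inter> X') = 1) + of_bool (card (e \<inter> Y') = 1)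
      \<le> of_bool (card (e \<inter> X) = 1) + (of_bool (card (e \<inter> Y) = 1) :: nat)"
    unfolding e card_Int_doubleton_eq_1[OF ab] by (rule assms(2))
qed

lemma dcut_Un_Int_le:
  assumes "\<forall>e \<in># E. card e = 2"
  shows "dcut E (X \<union> Y) + dcut E (X \<inter> Y) \<le> dcut E X + dcut E Y"
  by (rule dcut_add_le_if_edgewise[OF assms]) auto

lemma dcut_Diff_le:
  assumes "\<forall>e \<in># E. card e = 2"
  shows "dcut E (X - Y) + dcut E (Y - X) \<le> dcut E X + dcut E Y"
  by (rule dcut_add_le_if_edgewise[OF assms]) auto

lemma cost_uncross_le:
  assumes "\<forall>e \<in># E. card e = 2"
  shows "cost E (X \<union> U) (Y \<inter> I) + cost E (X \<inter> U) (Y \<union> I) \<le> cost E X Y + cost E U I"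
proof -
  have "dcut E (X \<union> U) + dcut E (X \<inter> U) \<le> dcut E X + dcut E U"
    and "dcut E (Y \<union> I) + dcut E (Y \<inter> I) \<le> dcut E Y + dcut E I"
    using dcut_Un_Int_le[OF assms] by auto
  then show ?thesis
    unfolding cost_def by (simp add: field_simps flip: of_nat_add)
qed

lemma terminal_family_memD:
  assumes "terminal_family V T" "p \<in> T"
  shows "p \<subseteq> V" "card p = 2"
  using assms unfolding terminal_family_def by blast+

lemma terminal_family_disjoint:
  assumes "terminal_family V T" "p \<in> T" "q \<in> T" "p \<noteq> q"
  shows "p \<inter> q = {}"
  using assms unfolding terminal_family_def by blast

lemma terminal_sepD:
  assumes "terminal_sep V T A B"
  shows "A \<subseteq> V" "B \<subseteq> V" "A \<inter> B = {}"
  using assms unfolding terminal_sep_def by blast+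

lemma terminal_sep_pair_subset_or_disjoint:
  assumes "terminal_family V T" "terminal_sep V T X Y" "p \<in> T"
  shows "p \<subseteq> X \<union> Y \<or> p \<inter> (X \<union> Y) = {}"
proof -
  obtain a b where p: "p = {a, b}" "a \<noteq> b"
    using terminal_family_memD(2)[OF assms(1,3)] by (meson card_2_iff)
  have "(card (p \<inter> X) = 1 \<and> card (p \<inter> Y) = 1) \<or> p \<inter> (X \<union> Y) = {}" "X \<inter> Y = {}"
    using assms(2,3) unfolding terminal_sep_def by auto
  then show ?thesis
    unfolding p card_Int_doubleton_eq_1[OF p(2)] by blast
qed

lemma terminal_sep_extend:
  assumes family: "terminal_family V T" and sep: "terminal_sep V T A B"
    and XY: "X \<subseteq> V" "Y \<subseteq> V" "X \<inter> Y = {}" "A \<subseteq> X" "B \<subseteq> Y"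
    and free: "\<And>p. p \<in> T \<Longrightarrow> p \<inter> (A \<union> B) = {} \<Longrightarrow>
      (card (p \<inter> X) = 1 \<and> card (p \<inter> Y) = 1) \<or> p \<inter> (X \<union> Y) = {}"
  shows "terminal_sep V T X Y"
  unfolding terminal_sep_def
proof (intro conjI ballI)
  fix p assume p: "p \<in> T"
  show "(card (p \<inter> X) = 1 \<and> card (p \<inter> Y) = 1) \<or> p \<inter> (X \<union> Y) = {}"
  proof (cases "p \<inter> (A \<union> B) = {}")
    case False
    then have "p \<subseteq> A \<union> B"
      using terminal_sep_pair_subset_or_disjoint[OF family sep p] by blast
    then have "p \<inter> X = p \<inter> A" "p \<inter> Y = p \<inter> B"
      using XY by auto
    then show ?thesis
      using sep p False unfolding terminal_sep_def by auto
  qed (rule free[OF p])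
qed (use XY in auto)

definition min_cost_sep ::
    "'a set \<Rightarrow> 'a set set \<Rightarrow> 'a set multiset \<Rightarrow> 'a set \<Rightarrow> 'a set \<Rightarrow> 'a set \<Rightarrow> 'a set \<Rightarrow> bool" where
  "min_cost_sep V T E A B X Y \<longleftrightarrow> terminal_sep V T X Y \<and> A \<subseteq> X \<and> B \<subseteq> Y \<and>
     (\<forall>X' Y'. terminal_sep V T X' Y' \<and> A \<subseteq> X' \<and> B \<subseteq> Y' \<longrightarrow> cost E X Y \<le> cost E X' Y')"

lemma min_cost_sepD:
  assumes "min_cost_sep V T E A B X Y"
  shows "terminal_sep V T X Y" "A \<subseteq> X" "B \<subseteq> Y"
    and "\<And>X' Y'. terminal_sep V T X' Y' \<Longrightarrow> A \<subseteq> X' \<Longrightarrow> B \<subseteq> Y' \<Longrightarrow> cost E X Y \<le> cost E X' Y'"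
  using assms unfolding min_cost_sep_def by blast+

lemma mem_min_max_seps_iff:
  "(X, Y) \<in> min_max_seps V T E A B \<longleftrightarrow> maximal_sep V T E X Y \<and> min_cost_sep V T E A B X Y"
  unfolding min_max_seps_def min_cost_sep_def maximal_sep_def by auto

lemma min_cost_sep_if_cost_le:
  assumes "min_cost_sep V T E A B X Y" "terminal_sep V T X' Y'" "A \<subseteq> X'" "B \<subseteq> Y'"
    and "cost E X' Y' \<le> cost E X Y"
  shows "min_cost_sep V T E A B X' Y'"
  using assms unfolding min_cost_sep_def by (blast intro: order_trans)

lemma finite_terminal_seps: "finite V \<Longrightarrow> finite {(X, Y). terminal_sep V T X Y}"
  by (rule finite_subset[of _ "Pow V \<times> Pow V"]) (auto simp: terminal_sep_def)

lemma ex_min_cost_sep: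
  assumes "finite V" "terminal_sep V T A B"
  shows "\<exists>X Y. min_cost_sep V T E A B X Y"
proof -
  let ?R = "{(X, Y). terminal_sep V T X Y \<and> A \<subseteq> X \<and> B \<subseteq> Y}"
  have "finite ?R"
    using finite_terminal_seps[OF assms(1)] by (rule rev_finite_subset) auto
  moreover have "(A, B) \<in> ?R"
    using assms(2) by auto
  ultimately obtain m where m: "is_arg_min (\<lambda>(X, Y). cost E X Y) (\<lambda>m. m \<in> ?R) m"
    using ex_is_arg_min_if_finite by blast
  obtain X Y where "m = (X, Y)"
    by fastforce
  with m have "min_cost_sep V T E A B X Y"
    unfolding is_arg_min_linorder min_cost_sep_def by auto
  then show ?thesis
    by blast
qed

text \<open>A componentwise maximal minimum-cost extension of (X, Y) is a maximal separation.\<close>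
lemma min_cost_sep_extends_to_min_max_sep:
  assumes "finite V" "min_cost_sep V T E A B X Y"
  shows "\<exists>X' Y'. (X', Y') \<in> min_max_seps V T E A B \<and> X \<subseteq> X' \<and> Y \<subseteq> Y'"
proof -
  let ?R = "{(X', Y'). min_cost_sep V T E A B X' Y'}"
  have "finite ?R"
    using finite_terminal_seps[OF assms(1)] by (rule rev_finite_subset) (auto simp: min_cost_sep_def)
  then obtain X' Y' where m: "(X', Y') \<in> ?R" "(X, Y) \<le> (X', Y')"
    and max: "\<And>Z. Z \<in> ?R \<Longrightarrow> (X', Y') \<le> Z \<Longrightarrow> (X', Y') = Z"
    using finite_has_maximal2[of ?R "(X, Y)"] assms(2) by force
  have "maximal_sep V T E X' Y'"
    unfolding maximal_sep_def
  proof (intro conjI allI impI)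
    show "terminal_sep V T X' Y'"
      using m(1) by (simp add: min_cost_sep_def)
    fix X'' Y''
    assume ext: "terminal_sep V T X'' Y'' \<and> X' \<subseteq> X'' \<and> Y' \<subseteq> Y'' \<and> (X'', Y'') \<noteq> (X', Y')"
    show "cost E X' Y' < cost E X'' Y''"
    proof (rule ccontr)
      assume "\<not> ?thesis"
      then have "(X'', Y'') \<in> ?R"
        using min_cost_sep_if_cost_le[of V T E A B X' Y' X'' Y''] m(1) ext
        by (auto simp: min_cost_sep_def)
      then have "(X', Y') = (X'', Y'')"
        using max[of "(X'', Y'')"] ext by (simp add: less_eq_prod_def)
      then show False
        using ext by simp
    qed
  qed
  then show ?thesis
    using m by (auto simp: mem_min_max_seps_iff less_eq_prod_def)
qed

lemma min_cost_sep_extension_eq: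
  assumes "maximal_sep V T E X Y" "min_cost_sep V T E A B X Y" "min_cost_sep V T E A B X' Y'"
    and "X \<subseteq> X'" "Y \<subseteq> Y'"
  shows "X' = X \<and> Y' = Y"
proof (rule ccontr)
  assume "\<not> ?thesis"
  then have "cost E X Y < cost E X' Y'"
    using assms(1,3-) unfolding maximal_sep_def min_cost_sep_def by blast
  moreover have "cost E X' Y' \<le> cost E X Y"
    using assms(2,3) unfolding min_cost_sep_def by blast
  ultimately show False
    by simp
qed

lemma Union_fst_Inter_snd_mem:
  assumes closed: "\<And>X Y U I. (X, Y) \<in> Q \<Longrightarrow> (U, I) \<in> Q \<Longrightarrow> (X \<union> U, Y \<inter> I) \<in> Q"
    and "finite G" "G \<noteq> {}" "G \<subseteq> Q"
  shows "(\<Union>(fst ` G), \<Inter>(snd ` G)) \<in> Q"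
  using assms(2-4)
proof (induction G rule: finite_ne_induct)
  case (insert Z G)
  then show ?case
    using closed[of "fst Z" "snd Z"] by simp
qed auto

locale terminal_branch =
  fixes V :: "'a set" and E :: "'a set multiset" and T :: "'a set set"
    and A0 B0 :: "'a set" and s t :: 'a
  assumes graph: "graph V E"
    and family: "terminal_family V T"
    and sep0: "terminal_sep V T A0 B0"
    and st_free: "{s, t} \<in> {p \<in> T. p \<inter> (A0 \<union> B0) = {}}"
    and other_free_pairs_uncovered: "\<forall>(X, Y) \<in> min_max_seps V T E (A0 \<union> {s}) (B0 \<union> {t}).
      \<forall>p \<in> {p \<in> T. p \<inter> (A0 \<union> B0) = {}}. p \<noteq> {s, t} \<longrightarrow> \<not> p \<subseteq> X \<union> Y"
begin

abbreviation free_pairs :: "'a set set" where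
  "free_pairs \<equiv> {p \<in> T. p \<inter> (A0 \<union> B0) = {}}"

abbreviation optimal :: "'a set \<Rightarrow> 'a set \<Rightarrow> bool" where
  "optimal \<equiv> min_cost_sep V T E (A0 \<union> {s}) (B0 \<union> {t})"

abbreviation \<F> :: "('a set \<times> 'a set) set" where
  "\<F> \<equiv> min_max_seps V T E (A0 \<union> {s}) (B0 \<union> {t})"

lemma finite_V: "finite V"
  using graph by (simp add: graph_def)

lemma edges_card_2: "\<forall>e \<in># E. card e = 2"
  using graph by (simp add: graph_def)

lemma st_mem: "{s, t} \<in> T"
  using st_free by simp

lemma s_neq_t: "s \<noteq> t"
  using terminal_family_memD(2)[OF family st_mem] by (cases "s = t") auto

lemma pair_disjoint_st: "p \<in> T \<Longrightarrow> p \<noteq> {s, t} \<Longrightarrow> p \<inter> {s, t} = {}"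
  using terminal_family_disjoint[OF family _ st_mem] by blast

definition other_terminals :: "'a set" where
  "other_terminals = \<Union>{p \<in> free_pairs. p \<noteq> {s, t}}"

definition confined :: "'a set \<Rightarrow> 'a set \<Rightarrow> bool" where
  "confined X Y \<longleftrightarrow> X \<subseteq> V \<and> Y \<subseteq> V \<and> X \<inter> Y = {} \<and> A0 \<union> {s} \<subseteq> X \<and> B0 \<union> {t} \<subseteq> Y \<and>
     (X \<union> Y) \<inter> other_terminals = {}"

lemma confined_terminal_sep:
  assumes "confined X Y"
  shows "terminal_sep V T X Y"
proof (rule terminal_sep_extend[OF family sep0])
  fix p assume p: "p \<in> T" "p \<inter> (A0 \<union> B0) = {}"
  show "(card (p \<inter> X) = 1 \<and> card (p \<inter> Y) = 1) \<or> p \<inter> (X \<union> Y) = {}"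
  proof (cases "p = {s, t}")
    case True
    then have "p \<inter> X = {s}" "p \<inter> Y = {t}"
      using assms unfolding confined_def by auto
    then show ?thesis
      by simp
  next
    case False
    then show ?thesis
      using assms p unfolding confined_def other_terminals_def by blast
  qed
qed (use assms in \<open>auto simp: confined_def\<close>)

lemma confined_init: "confined (A0 \<union> {s}) (B0 \<union> {t})"
proof -
  have "s \<in> V" "t \<in> V"
    using terminal_family_memD(1)[OF family st_mem] by auto
  moreover have "s \<notin> A0 \<union> B0" "t \<notin> A0 \<union> B0"
    using st_free by auto
  moreover have "(A0 \<union> B0 \<union> {s, t}) \<inter> other_terminals = {}"
    using pair_disjoint_st unfolding other_terminals_def by blast
  ultimately show ?thesis
    using terminal_sepD[OF sep0] s_neq_t unfolding confined_def by blast
qed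

text \<open>Here the hypothesis on \<F> enters: a pair of a terminal separation is either covered
  or avoided, and the members of \<F> do not cover any other free pair.\<close>
lemma optimal_confined:
  assumes "optimal X Y"
  shows "confined X Y"
proof -
  obtain X' Y' where F: "(X', Y') \<in> \<F>" "X \<subseteq> X'" "Y \<subseteq> Y'"
    using min_cost_sep_extends_to_min_max_sep[OF finite_V assms] by blast
  then have sep: "terminal_sep V T X' Y'"
    by (simp add: mem_min_max_seps_iff maximal_sep_def)
  have "p \<inter> (X' \<union> Y') = {}" if p: "p \<in> free_pairs" "p \<noteq> {s, t}" for p
  proof -
    have "\<not> p \<subseteq> X' \<union> Y'"
      using other_free_pairs_uncovered F(1) p by auto
    then show ?thesis
      using terminal_sep_pair_subset_or_disjoint[OF family sep] p by auto
  qed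
  then have "(X \<union> Y) \<inter> other_terminals = {}"
    using F unfolding other_terminals_def by blast
  then show ?thesis
    using terminal_sepD[OF min_cost_sepD(1)[OF assms]] min_cost_sepD(2,3)[OF assms]
    unfolding confined_def by blast
qed

lemma confined_uncross:
  assumes "confined X Y" "confined U I"
  shows "confined (X \<union> U) (Y \<inter> I)" "confined (X \<inter> U) (Y \<union> I)"
  using assms unfolding confined_def by auto

lemma optimal_cost_le_confined:
  assumes "optimal X Y" "confined X' Y'"
  shows "cost E X Y \<le> cost E X' Y'"
  using min_cost_sepD(4)[OF assms(1) confined_terminal_sep[OF assms(2)]] assms(2)
  unfolding confined_def by blast

lemma optimal_if_confined_cost_le:
  assumes "optimal X Y" "confined X' Y'" "cost E X' Y' \<le> cost E X Y"
  shows "optimal X' Y'"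
proof -
  have "A0 \<union> {s} \<subseteq> X'" "B0 \<union> {t} \<subseteq> Y'"
    using assms(2) by (simp_all add: confined_def)
  then show ?thesis
    by (rule min_cost_sep_if_cost_le[OF assms(1) confined_terminal_sep[OF assms(2)] _ _ assms(3)])
qed

lemma optimal_uncross:
  assumes XY: "optimal X Y" and UI: "optimal U I"
  shows "optimal (X \<union> U) (Y \<inter> I)" "optimal (X \<inter> U) (Y \<union> I)"
proof -
  note conf = confined_uncross[OF optimal_confined[OF XY] optimal_confined[OF UI]]
  have "cost E X Y = cost E U I"
    using optimal_cost_le_confined[OF XY optimal_confined[OF UI]]
      optimal_cost_le_confined[OF UI optimal_confined[OF XY]] by simp
  moreover have "cost E X Y \<le> cost E (X \<union> U) (Y \<inter> I)" "cost E X Y \<le> cost E (X \<inter> U) (Y \<union> I)"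
    using optimal_cost_le_confined[OF XY] conf by blast+
  moreover have "cost E (X \<union> U) (Y \<inter> I) + cost E (X \<inter> U) (Y \<union> I) \<le> cost E X Y + cost E U I"
    by (rule cost_uncross_le[OF edges_card_2])
  ultimately have "cost E (X \<union> U) (Y \<inter> I) \<le> cost E X Y" "cost E (X \<inter> U) (Y \<union> I) \<le> cost E X Y"
    by linarith+
  then show "optimal (X \<union> U) (Y \<inter> I)" "optimal (X \<inter> U) (Y \<union> I)"
    using optimal_if_confined_cost_le[OF XY conf(1)] optimal_if_confined_cost_le[OF XY conf(2)]
    by blast+
qed

definition Amax :: "'a set" where
  "Amax = \<Union>(fst ` \<F>)"

definition Bmin :: "'a set" where
  "Bmin = \<Inter>(snd ` \<F>)"

lemma F_dominated: "(X, Y) \<in> \<F> \<Longrightarrow> X \<subseteq> Amax \<and> Bmin \<subseteq> Y"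
  unfolding Amax_def Bmin_def by force

lemma finite_F: "finite \<F>"
  by (rule rev_finite_subset[OF finite_terminal_seps[OF finite_V]])
    (auto simp: mem_min_max_seps_iff maximal_sep_def)

lemma F_nonempty: "\<F> \<noteq> {}"
proof -
  obtain X Y where "optimal X Y"
    using ex_min_cost_sep[OF finite_V confined_terminal_sep[OF confined_init]] by blast
  then show ?thesis
    using min_cost_sep_extends_to_min_max_sep[OF finite_V] by blast
qed

lemma optimal_Amax_Bmin: "optimal Amax Bmin"
proof -
  have "(Amax, Bmin) \<in> {(X, Y). optimal X Y}"
    unfolding Amax_def Bmin_def
  proof (rule Union_fst_Inter_snd_mem[OF _ finite_F F_nonempty])
    show "\<And>X Y U I. (X, Y) \<in> {(X, Y). optimal X Y} \<Longrightarrow> (U, I) \<in> {(X, Y). optimal X Y} \<Longrightarrow>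
        (X \<union> U, Y \<inter> I) \<in> {(X, Y). optimal X Y}"
      using optimal_uncross(1) by simp
    show "\<F> \<subseteq> {(X, Y). optimal X Y}"
      by (auto simp: mem_min_max_seps_iff)
  qed
  then show ?thesis
    by simp
qed

text \<open>Uncrossing an optimal (X', Y') with a member (X, Y) of \<F> below it yields the
  optimal extension (X, Y' \<union> Y) of (X, Y), which by maximality is (X, Y) itself.\<close>
lemma optimal_snd_subset:
  assumes "optimal X' Y'" "(X, Y) \<in> \<F>" "X \<subseteq> X'"
  shows "Y' \<subseteq> Y"
proof -
  have max: "maximal_sep V T E X Y" and opt: "optimal X Y"
    using assms(2) by (simp_all add: mem_min_max_seps_iff)
  have "X' \<inter> X = X"
    using assms(3) by blast
  then have "optimal X (Y' \<union> Y)"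
    using optimal_uncross(2)[OF assms(1) opt] by simp
  then have "Y' \<union> Y = Y"
    using min_cost_sep_extension_eq[OF max opt] by blast
  then show ?thesis
    by blast
qed

lemma Amax_Bmin_mem_F: "(Amax, Bmin) \<in> \<F>"
proof -
  obtain X Y where F: "(X, Y) \<in> \<F>" "Amax \<subseteq> X" "Bmin \<subseteq> Y"
    using min_cost_sep_extends_to_min_max_sep[OF finite_V optimal_Amax_Bmin] by blast
  then have X: "X = Amax"
    using F_dominated by blast
  have opt: "optimal X Y"
    using F(1) by (simp add: mem_min_max_seps_iff)
  have "Y \<subseteq> Bmin"
    unfolding Bmin_def
  proof (rule INF_greatest)
    fix Z assume "Z \<in> \<F>"
    moreover have "fst Z \<subseteq> X"
      using F_dominated[of "fst Z" "snd Z"] \<open>Z \<in> \<F>\<close> X by simp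
    ultimately show "Y \<subseteq> snd Z"
      using optimal_snd_subset[OF opt, of "fst Z" "snd Z"] by simp
  qed
  with F X show ?thesis
    by auto
qed

lemma dcut_Amax_less:
  assumes A: "A \<subseteq> V" "A0 \<union> {s} \<subseteq> A" "A \<inter> B0 = {}" "A \<inter> \<Union>free_pairs \<subseteq> {s}"
    and not_below: "\<not> A \<subseteq> Amax"
  shows "dcut E Amax < dcut E A"
proof -
  have conf: "confined Amax Bmin"
    by (rule optimal_confined[OF optimal_Amax_Bmin])
  have "t \<notin> A"
    using A(4) st_free s_neq_t by blast
  moreover have "A \<inter> other_terminals = {}"
    using A(4) pair_disjoint_st unfolding other_terminals_def by blast
  ultimately have conf_A: "confined A (Bmin - A)" and conf_A': "confined (A - Bmin) Bmin"
    using A conf unfolding confined_def by auto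
  have "\<not> optimal A (Bmin - A)"
    using min_cost_sep_extends_to_min_max_sep[OF finite_V] F_dominated not_below by blast
  then have less: "cost E Amax Bmin < cost E A (Bmin - A)"
    using optimal_if_confined_cost_le[OF optimal_Amax_Bmin conf_A] by linarith
  have le: "cost E Amax Bmin \<le> cost E (A - Bmin) Bmin"
    by (rule optimal_cost_le_confined[OF optimal_Amax_Bmin conf_A'])
  have "dcut E Amax + dcut E Bmin < dcut E A + dcut E (Bmin - A)"
    "dcut E Amax \<le> dcut E (A - Bmin)"
    using less le unfolding cost_def by (simp_all flip: of_nat_add)
  moreover have "dcut E (A - Bmin) + dcut E (Bmin - A) \<le> dcut E A + dcut E Bmin"
    by (rule dcut_Diff_le[OF edges_card_2])
  ultimately show ?thesis
    by linarith
qed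

end

theorem lemma5p4:
  fixes V :: "'a set" and E :: "'a set multiset" and T :: "'a set set"
    and A0 B0 :: "'a set" and k :: nat and s t :: 'a
  defines "T' \<equiv> {p \<in> T. p \<inter> (A0 \<union> B0) = {}}"
  defines "F \<equiv> min_max_seps V T E (A0 \<union> {s}) (B0 \<union> {t})"
  assumes inst: "TS_instance V E T A0 B0 k"
    and st: "{s, t} \<in> T'"
    and hyp: "\<forall>(A', B') \<in> F. \<forall>p \<in> T'. p \<noteq> {s, t} \<longrightarrow> \<not> p \<subseteq> A' \<union> B'"
  shows "(\<exists>!(Am, Bm). (Am, Bm) \<in> F \<and> (\<forall>(As, Bt) \<in> F. As \<subseteq> Am \<and> Bm \<subseteq> Bt))
    \<and> (\<forall>Am Bm. (Am, Bm) \<in> F \<and> (\<forall>(As, Bt) \<in> F. As \<subseteq> Am \<and> Bm \<subseteq> Bt) \<longrightarrow>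
         (\<forall>A. A \<subseteq> V \<and> A0 \<union> {s} \<subseteq> A \<and> A \<inter> B0 = {} \<and> A \<inter> \<Union>T' \<subseteq> {s} \<and> A - Am \<noteq> {}
              \<longrightarrow> dcut E A > dcut E Am))"
proof -
  interpret terminal_branch V E T A0 B0 s t
    using inst st hyp unfolding TS_instance_def T'_def F_def by unfold_locales auto
  have dominant_iff: "(Am, Bm) \<in> F \<and> (\<forall>(As, Bt) \<in> F. As \<subseteq> Am \<and> Bm \<subseteq> Bt)
      \<longleftrightarrow> (Am, Bm) = (Amax, Bmin)" for Am Bm
    using Amax_Bmin_mem_F F_dominated unfolding F_def by fastforce
  show ?thesis
    unfolding dominant_iff T'_def using dcut_Amax_less by auto
qed

end
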